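(* Let $X$ be a nonsingular projective toric variety. If $\beta\in H_2(X,\mathbb{Z})$ satisfies $\int_\beta A>0$ for every ample divisor $A$, then the set $\{D \text{ toric divisor} : \int_\beta D>0\}$ contains a primitive set.
   Context: Toric divisors are the torus-invariant prime divisors of $X$. A primitive set is a set $\{D_1,\ldots,D_k\}$ of toric divisors with $D_1\cap\cdots\cap D_k=\emptyset$ such that every proper subset has nonempty intersection. *)

theory Defs
  imports "HOL-Analysis.Analysis"
begin

text \<open>A toric variety is encoded by its fan in N_R = real^'n, N = integer points.
  The rays are v 0, ..., v (m-1); toric divisor D_i corresponds to ray v i.
  A cone of the fan is given by the set S of indices of its generating rays
  (smooth cones are simplicial, so this is unambiguous).\<close>

definition integral_vec :: "real^'n \<Rightarrow> bool" where
  "integral_vec x \<longleftrightarrow> (\<forall>k. x $ k \<in> \<int>)"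

definition cone_gen :: "(nat \<Rightarrow> real^'n) \<Rightarrow> nat set \<Rightarrow> (real^'n) set" where
  "cone_gen v S = {x. \<exists>c. (\<forall>i\<in>S. c i \<ge> 0) \<and> x = (\<Sum>i\<in>S. c i *\<^sub>R v i)}"

text \<open>The cone generated by v`S is smooth: its generators are part of a Z-basis of N.\<close>
definition smooth_cone :: "(nat \<Rightarrow> real^'n) \<Rightarrow> nat set \<Rightarrow> bool" where
  "smooth_cone v S \<longleftrightarrow>
     (\<exists>B :: real^'n^'n. \<exists>f :: nat \<Rightarrow> 'n.
        (\<forall>k. integral_vec (B $ k)) \<and> (det B = 1 \<or> det B = -1) \<and>
        inj_on f S \<and> (\<forall>i\<in>S. B $ (f i) = v i))"

definition smooth_complete_fan ::
  "nat \<Rightarrow> (nat \<Rightarrow> real^'n) \<Rightarrow> nat set set \<Rightarrow> bool" where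
  "smooth_complete_fan m v Fan \<longleftrightarrow>
     inj_on v {..<m} \<and>
     (\<forall>i<m. integral_vec (v i)) \<and>
     (\<forall>S\<in>Fan. S \<subseteq> {..<m}) \<and>
     (\<forall>i<m. {i} \<in> Fan) \<and>
     (\<forall>S\<in>Fan. \<forall>T. T \<subseteq> S \<longrightarrow> T \<in> Fan) \<and>
     (\<forall>S\<in>Fan. smooth_cone v S) \<and>
     (\<forall>S\<in>Fan. \<forall>T\<in>Fan. cone_gen v S \<inter> cone_gen v T = cone_gen v (S \<inter> T)) \<and>
     (\<Union>S\<in>Fan. cone_gen v S) = UNIV"

definition maximal_cone :: "nat set set \<Rightarrow> nat set \<Rightarrow> bool" where
  "maximal_cone Fan S \<longleftrightarrow> S \<in> Fan \<and> \<not> (\<exists>T\<in>Fan. S \<subset> T)"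

text \<open>The torus-invariant divisor D = sum_i a_i D_i is ample iff its support function is
  strictly convex: for each maximal cone sigma there is u in M_R with
  <u, v_i> = -a_i for rays of sigma and <u, v_i> > -a_i for the other rays.\<close>
definition ample_div ::
  "nat \<Rightarrow> (nat \<Rightarrow> real^'n) \<Rightarrow> nat set set \<Rightarrow> (nat \<Rightarrow> int) \<Rightarrow> bool" where
  "ample_div m v Fan a \<longleftrightarrow>
     (\<forall>S. maximal_cone Fan S \<longrightarrow>
        (\<exists>u :: real^'n. (\<forall>i\<in>S. u \<bullet> v i = - of_int (a i)) \<and>
                        (\<forall>i<m. i \<notin> S \<longrightarrow> u \<bullet> v i > - of_int (a i))))"

definition projective_fan :: "nat \<Rightarrow> (nat \<Rightarrow> real^'n) \<Rightarrow> nat set set \<Rightarrow> bool" where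
  "projective_fan m v Fan \<longleftrightarrow> (\<exists>a. ample_div m v Fan a)"

text \<open>H_2(X,Z) of a smooth complete toric variety = lattice of integer relations
  b among the rays (sum b_i v_i = 0), with the pairing int_beta D_i = b_i.\<close>
definition curve_class :: "nat \<Rightarrow> (nat \<Rightarrow> real^'n) \<Rightarrow> (nat \<Rightarrow> int) \<Rightarrow> bool" where
  "curve_class m v b \<longleftrightarrow> (\<forall>i. i \<ge> m \<longrightarrow> b i = 0) \<and> (\<Sum>i<m. of_int (b i) *\<^sub>R v i) = 0"

definition intersect :: "nat \<Rightarrow> (nat \<Rightarrow> int) \<Rightarrow> (nat \<Rightarrow> int) \<Rightarrow> int" where
  "intersect m b a = (\<Sum>i<m. a i * b i)"

text \<open>D_{i1} \<inter> ... \<inter> D_{ik} is nonempty iff {v_i1..v_ik} generate a cone of the fan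
  (orbit-cone correspondence). Primitive set of toric divisors (by ray index).\<close>
definition primitive_set :: "nat set set \<Rightarrow> nat set \<Rightarrow> bool" where
  "primitive_set Fan P \<longleftrightarrow> P \<notin> Fan \<and> (\<forall>Q. Q \<subset> P \<longrightarrow> Q \<in> Fan)"

end

theory Submission
  imports Defs
begin

text \<open>Let I be the set of rays on which \<beta> is positive. If I is not a cone of the fan, an
  inclusion-minimal non-cone inside I is a primitive set. If I is a cone, it lies in a
  maximal cone \<sigma>. Subtracting the principal divisor of the linear form u attached to \<sigma>
  by an ample divisor A does not change the degree of \<beta>, and turns A into a divisor whose
  coefficients vanish on \<sigma> and are positive off \<sigma>, where \<beta> is nonpositive; so the
  degree of \<beta> on A is at most 0.\<close>

lemma exists_primitive_subset:
  assumes "finite I" and "I \<notin> Fan"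
  shows "\<exists>P\<subseteq>I. primitive_set Fan P"
proof -
  define C where "C = {P. P \<subseteq> I \<and> P \<notin> Fan}"
  have "finite C" "C \<noteq> {}"
    using assms unfolding C_def by auto
  then obtain P where "P \<in> C" and minimal: "\<forall>Q\<in>C. Q \<subseteq> P \<longrightarrow> P = Q"
    using finite_has_minimal by blast
  then have "primitive_set Fan P"
    unfolding primitive_set_def C_def by auto
  with \<open>P \<in> C\<close> show ?thesis
    unfolding C_def by auto
qed

lemma smooth_complete_fan_finite:
  assumes "smooth_complete_fan m v Fan"
  shows "finite Fan"
proof (rule finite_subset)
  show "Fan \<subseteq> Pow {..<m}"
    using assms unfolding smooth_complete_fan_def by auto
qed auto

lemma cone_in_maximal_cone:
  assumes "finite Fan" and "T \<in> Fan"
  obtains S where "maximal_cone Fan S" and "T \<subseteq> S"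
proof -
  have "finite {S\<in>Fan. T \<subseteq> S}" "{S\<in>Fan. T \<subseteq> S} \<noteq> {}"
    using assms by auto
  then obtain S where "S \<in> {S\<in>Fan. T \<subseteq> S}"
    and "\<forall>S'\<in>{S\<in>Fan. T \<subseteq> S}. S \<subseteq> S' \<longrightarrow> S = S'"
    using finite_has_maximal by blast
  then have "maximal_cone Fan S" "T \<subseteq> S"
    unfolding maximal_cone_def by auto
  then show thesis
    using that by blast
qed

lemma intersect_add_principal:
  fixes u :: "real^'n"
  assumes "curve_class m v b"
  shows "real_of_int (intersect m b a) = (\<Sum>i<m. (of_int (a i) + u \<bullet> v i) * of_int (b i))"
proof -
  have "(\<Sum>i<m. (u \<bullet> v i) * of_int (b i)) = u \<bullet> (\<Sum>i<m. of_int (b i) *\<^sub>R v i)"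
    by (simp add: inner_sum_right mult.commute)
  also have "\<dots> = 0"
    using assms unfolding curve_class_def by simp
  finally have "(\<Sum>i<m. (u \<bullet> v i) * of_int (b i)) = 0" .
  then show ?thesis
    unfolding intersect_def by (simp add: distrib_right sum.distrib)
qed

lemma ample_intersect_nonpos:
  fixes v :: "nat \<Rightarrow> real^'n"
  assumes "ample_div m v Fan a" and "maximal_cone Fan S" and "curve_class m v b"
    and nonpos: "\<forall>i<m. i \<notin> S \<longrightarrow> b i \<le> 0"
  shows "intersect m b a \<le> 0"
proof -
  obtain u where on_S: "\<forall>i\<in>S. u \<bullet> v i = - of_int (a i)"
    and off_S: "\<forall>i<m. i \<notin> S \<longrightarrow> u \<bullet> v i > - of_int (a i)"
    using assms(1,2) unfolding ample_div_def by blast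
  have "real_of_int (intersect m b a) = (\<Sum>i<m. (of_int (a i) + u \<bullet> v i) * of_int (b i))"
    using assms(3) by (rule intersect_add_principal)
  also have "\<dots> \<le> 0"
  proof (rule sum_nonpos)
    fix i assume "i \<in> {..<m}"
    show "(of_int (a i) + u \<bullet> v i) * of_int (b i) \<le> (0::real)"
    proof (cases "i \<in> S")
      case True
      then show ?thesis
        using on_S by simp
    next
      case False
      then have "of_int (a i) + u \<bullet> v i > 0" and "b i \<le> 0"
        using off_S nonpos \<open>i \<in> {..<m}\<close> by force+
      then show ?thesis
        by (simp add: mult_nonneg_nonpos)
    qed
  qed
  finally show ?thesis
    by simp
qed

theorem corollary2p2:
  fixes m :: nat and v :: "nat \<Rightarrow> real^'n" and Fan :: "nat set set" and b :: "nat \<Rightarrow> int"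
  assumes "smooth_complete_fan m v Fan"
    and "projective_fan m v Fan"
    and "curve_class m v b"
    and "\<forall>a. ample_div m v Fan a \<longrightarrow> intersect m b a > 0"
  shows "\<exists>P. P \<subseteq> {i. i < m \<and> b i > 0} \<and> primitive_set Fan P"
proof (rule ccontr)
  define I where "I = {i. i < m \<and> b i > 0}"
  assume "\<not> ?thesis"
  then have "I \<in> Fan"
    using exists_primitive_subset[of I Fan] unfolding I_def by auto
  then obtain S where "maximal_cone Fan S" and "I \<subseteq> S"
    using cone_in_maximal_cone smooth_complete_fan_finite[OF assms(1)] by blast
  obtain a where "ample_div m v Fan a"
    using assms(2) unfolding projective_fan_def by blast
  moreover have "\<forall>i<m. i \<notin> S \<longrightarrow> b i \<le> 0"
    using \<open>I \<subseteq> S\<close> unfolding I_def by auto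
  ultimately have "intersect m b a \<le> 0"
    using \<open>maximal_cone Fan S\<close> assms(3) ample_intersect_nonpos by blast
  with assms(4) \<open>ample_div m v Fan a\<close> show False
    by fastforce
qed

end
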